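(* Let $G$ be a connected graph with $E(G)\neq\emptyset$, and let $x,y\in V(G)$ be distinct vertices such that $G+xy$ has no cutvertex. Then there exists an $x$--$y$ bond $F$ in $G$ such that $\mathrm{pw}(G-y;x)\le 3|F|-2$; moreover, if $G$ itself has no cutvertex, then $F$ can be chosen so that $\mathrm{pw}(G-y;x)\le 3|F|-3$.
   Context: A bond of a graph $G$ is an inclusion-wise minimal set of edges $F$ such that $G-F$ has more connected components than $G$. For distinct vertices $x,y$, an $x$--$y$ bond is a bond $F$ such that $x$ and $y$ lie in different components of $G-F$. $G+xy$ denotes $G$ with the edge $xy$ added (if not already present). A path-decomposition of $H$ is a sequence $(X_0,\dots,X_s)$ of subsets of $V(H)$ such that for each vertex $v$ the indices $i$ with $v\in X_i$ form a non-empty interval, and each edge has both ends in some $X_i$; its width is $\max_i|X_i|-1$. For $x\in V(H)$, $\mathrm{pw}(H;x)$ denotes the minimum width of a path-decomposition $(X_0,\dots,X_s)$ of $H$ with $x\in X_0$. *)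

theory Defs
  imports Main
begin

definition graph :: "'a set \<Rightarrow> 'a set set \<Rightarrow> bool" where
  "graph V E \<longleftrightarrow> finite V \<and> (\<forall>e\<in>E. \<exists>u v. e = {u, v} \<and> u \<noteq> v \<and> u \<in> V \<and> v \<in> V)"

definition adj :: "'a set set \<Rightarrow> 'a \<Rightarrow> 'a \<Rightarrow> bool" where
  "adj E u v \<longleftrightarrow> {u, v} \<in> E \<and> u \<noteq> v"

definition reach :: "'a set \<Rightarrow> 'a set set \<Rightarrow> 'a \<Rightarrow> 'a \<Rightarrow> bool" where
  "reach V E u v \<longleftrightarrow> u \<in> V \<and> v \<in> V \<and>
     (\<lambda>a b. a \<in> V \<and> b \<in> V \<and> adj E a b)\<^sup>*\<^sup>* u v"

definition components :: "'a set \<Rightarrow> 'a set set \<Rightarrow> 'a set set" where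
  "components V E = (\<lambda>v. {u. reach V E v u}) ` V"

definition ncomp :: "'a set \<Rightarrow> 'a set set \<Rightarrow> nat" where
  "ncomp V E = card (components V E)"

definition connected_graph :: "'a set \<Rightarrow> 'a set set \<Rightarrow> bool" where
  "connected_graph V E \<longleftrightarrow> V \<noteq> {} \<and> (\<forall>u\<in>V. \<forall>v\<in>V. reach V E u v)"

definition del_vertex_edges :: "'a set set \<Rightarrow> 'a \<Rightarrow> 'a set set" where
  "del_vertex_edges E v = {e \<in> E. v \<notin> e}"

definition is_cutvertex :: "'a set \<Rightarrow> 'a set set \<Rightarrow> 'a \<Rightarrow> bool" where
  "is_cutvertex V E v \<longleftrightarrow> v \<in> V \<and> ncomp (V - {v}) (del_vertex_edges E v) > ncomp V E"

definition has_cutvertex :: "'a set \<Rightarrow> 'a set set \<Rightarrow> bool" where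
  "has_cutvertex V E \<longleftrightarrow> (\<exists>v. is_cutvertex V E v)"

definition disconnecting :: "'a set \<Rightarrow> 'a set set \<Rightarrow> 'a set set \<Rightarrow> bool" where
  "disconnecting V E F \<longleftrightarrow> F \<subseteq> E \<and> ncomp V (E - F) > ncomp V E"

definition bond :: "'a set \<Rightarrow> 'a set set \<Rightarrow> 'a set set \<Rightarrow> bool" where
  "bond V E F \<longleftrightarrow> disconnecting V E F \<and> (\<forall>F'. F' \<subset> F \<longrightarrow> \<not> disconnecting V E F')"

definition xy_bond :: "'a set \<Rightarrow> 'a set set \<Rightarrow> 'a \<Rightarrow> 'a \<Rightarrow> 'a set set \<Rightarrow> bool" where
  "xy_bond V E x y F \<longleftrightarrow> bond V E F \<and> x \<in> V \<and> y \<in> V \<and> \<not> reach V (E - F) x y"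

definition path_decomp :: "'a set \<Rightarrow> 'a set set \<Rightarrow> 'a set list \<Rightarrow> bool" where
  "path_decomp V E Xs \<longleftrightarrow> Xs \<noteq> [] \<and> (\<forall>X\<in>set Xs. X \<subseteq> V) \<and>
     (\<forall>v\<in>V. \<exists>a b. a \<le> b \<and> b < length Xs \<and> {i. i < length Xs \<and> v \<in> Xs ! i} = {a..b}) \<and>
     (\<forall>e\<in>E. \<exists>i<length Xs. e \<subseteq> Xs ! i)"

definition pd_width :: "'a set list \<Rightarrow> int" where
  "pd_width Xs = int (Max (card ` set Xs)) - 1"

definition pw_at :: "'a set \<Rightarrow> 'a set set \<Rightarrow> 'a \<Rightarrow> int" where
  "pw_at V E x = (LEAST w. \<exists>Xs. path_decomp V E Xs \<and> x \<in> hd Xs \<and> w = pd_width Xs)"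

end

theory Submission
  imports Defs
begin

text \<open>Since \<open>G + xy\<close> has no cutvertex, the vertices of \<open>G - y\<close> can be ordered
  \<open>x = v\<^sub>1, \<dots>, v\<^sub>n\<close> so that every prefix \<open>P\<^sub>k = {v\<^sub>1, \<dots>, v\<^sub>k}\<close> and its complement \<open>V - P\<^sub>k\<close>
  induce connected subgraphs of \<open>G\<close>: grow the prefix greedily by a neighbour on the side of
  \<open>y\<close> whose removal keeps that side connected, and choose it to cut off as few vertices from
  \<open>y\<close> as possible. Each edge cut \<open>\<delta>(P\<^sub>k)\<close> is then an \<open>x\<close>--\<open>y\<close> bond. Taking as \<open>k\<close>-th bag
  \<open>v\<^sub>k\<close> together with the earlier vertices that have a neighbour among \<open>v\<^sub>k, \<dots>, v\<^sub>n\<close> gives a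
  path-decomposition of \<open>G - y\<close> starting at \<open>x\<close> in which bag \<open>k\<close> has at most \<open>1 + |\<delta>(P\<^sub>k)|\<close>
  vertices, so \<open>pw(G - y; x) \<le> |F|\<close> for the largest of these bonds \<open>F\<close>. This is at most
  \<open>3|F| - 2\<close>; if \<open>G\<close> has no cutvertex and \<open>n \<ge> 2\<close>, then \<open>x\<close> has degree at least \<open>2\<close>, so
  \<open>|F| \<ge> 2\<close> and the bound is at most \<open>3|F| - 3\<close>; if \<open>n = 1\<close> the width is \<open>0\<close>.\<close>

section \<open>Connectivity\<close>

definition connected_on :: "'a set \<Rightarrow> 'a set set \<Rightarrow> bool" where
  "connected_on S E \<longleftrightarrow> (\<forall>u\<in>S. \<forall>v\<in>S. reach S E u v)"

lemma adj_sym: "adj E u v \<Longrightarrow> adj E v u"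
  by (auto simp: adj_def insert_commute)

lemma reach_refl: "u \<in> S \<Longrightarrow> reach S E u u"
  by (simp add: reach_def)

lemma reach_in: "reach S E u v \<Longrightarrow> u \<in> S \<and> v \<in> S"
  by (simp add: reach_def)

lemma reach_step: "adj E u v \<Longrightarrow> u \<in> S \<Longrightarrow> v \<in> S \<Longrightarrow> reach S E u v"
  by (auto simp: reach_def)

lemma reach_trans: "reach S E u v \<Longrightarrow> reach S E v w \<Longrightarrow> reach S E u w"
  by (auto simp: reach_def)

lemma reach_sym: "reach S E u v \<Longrightarrow> reach S E v u"
proof -
  let ?r = "\<lambda>a b. a \<in> S \<and> b \<in> S \<and> adj E a b"
  have sym: "?r\<inverse>\<inverse> = ?r" by (auto simp: fun_eq_iff intro: adj_sym)
  assume "reach S E u v"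
  then have "?r\<^sup>*\<^sup>* u v" "u \<in> S" "v \<in> S" by (auto simp: reach_def)
  then have "?r\<inverse>\<inverse>\<^sup>*\<^sup>* v u" by (simp add: rtranclp_converseI)
  with \<open>u \<in> S\<close> \<open>v \<in> S\<close> show ?thesis by (simp add: sym reach_def)
qed

lemma reach_mono:
  assumes "reach S E u v" "S \<subseteq> S'"
    and "\<And>a b. a \<in> S \<Longrightarrow> b \<in> S \<Longrightarrow> adj E a b \<Longrightarrow> adj E' a b"
  shows "reach S' E' u v"
proof -
  have "(\<lambda>a b. a \<in> S \<and> b \<in> S \<and> adj E a b)\<^sup>*\<^sup>* u v" using assms(1) by (simp add: reach_def)
  then have "(\<lambda>a b. a \<in> S' \<and> b \<in> S' \<and> adj E' a b)\<^sup>*\<^sup>* u v"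
    by (induction rule: rtranclp_induct)
      (use assms(2,3) in \<open>auto intro: rtranclp.rtrancl_into_rtrancl\<close>)
  with assms(1,2) show ?thesis by (auto simp: reach_def)
qed

lemma reach_leaves_set:
  assumes "reach S E a b" "a \<in> A" "b \<notin> A"
  shows "\<exists>u\<in>S \<inter> A. \<exists>w\<in>S - A. adj E u w"
proof -
  have "(\<lambda>a b. a \<in> S \<and> b \<in> S \<and> adj E a b)\<^sup>*\<^sup>* a b" using assms(1) by (simp add: reach_def)
  then show ?thesis using assms(3)
    by (induction rule: rtranclp_induct) (use assms(2) in blast)+
qed

lemma reach_within_component:
  assumes "reach S E a b"
  shows "reach {z \<in> S. reach S E z b} E a b"
proof -
  have "(\<lambda>a b. a \<in> S \<and> b \<in> S \<and> adj E a b)\<^sup>*\<^sup>* a b" using assms by (simp add: reach_def)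
  then show ?thesis using assms
  proof (induction rule: converse_rtranclp_induct)
    case base
    then show ?case by (auto simp: reach_def)
  next
    case (step a c)
    then have "reach S E c b" by (auto simp: reach_def intro: converse_rtranclp_into_rtranclp)
    moreover from this step have "reach {z \<in> S. reach S E z b} E a c"
      by (intro reach_step) auto
    ultimately show ?case using step.IH by (blast intro: reach_trans)
  qed
qed

lemma connected_onI:
  assumes "\<And>a. a \<in> S \<Longrightarrow> reach S E a c"
  shows "connected_on S E"
  unfolding connected_on_def using assms by (blast intro: reach_trans reach_sym)

lemma ncomp_eq_1_if_connected_on:
  assumes "connected_on V E" "V \<noteq> {}"
  shows "ncomp V E = 1"
proof -
  have "components V E = {V}"
    using assms by (auto simp: components_def connected_on_def dest: reach_in)
  then show ?thesis by (simp add: ncomp_def)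
qed

lemma ncomp_ge_2_if_not_reach:
  assumes "finite V" "a \<in> V" "b \<in> V" "\<not> reach V E a b"
  shows "ncomp V E \<ge> 2"
proof -
  let ?c = "\<lambda>v. {u. reach V E v u}"
  have "?c a \<noteq> ?c b" using assms reach_refl[of b V E] by auto
  moreover have "{?c a, ?c b} \<subseteq> components V E"
    using assms by (auto simp: components_def)
  moreover have "finite (components V E)" using assms(1) by (simp add: components_def)
  ultimately have "card {?c a, ?c b} \<le> card (components V E)"
    by (intro card_mono)
  with \<open>?c a \<noteq> ?c b\<close> show ?thesis by (simp add: ncomp_def)
qed

lemma connected_on_delete_vertex_if_no_cutvertex:
  assumes "finite V" "connected_graph V E" "\<not> has_cutvertex V E"
  shows "connected_on (V - {v}) E"
  unfolding connected_on_def
proof (intro ballI, cases "v \<in> V")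
  fix a b assume "a \<in> V - {v}" "b \<in> V - {v}"
  case True
  have "ncomp V E = 1"
    using assms(2) by (intro ncomp_eq_1_if_connected_on) (auto simp: connected_graph_def connected_on_def)
  then have "ncomp (V - {v}) (del_vertex_edges E v) \<le> 1"
    using assms(3) True by (auto simp: has_cutvertex_def is_cutvertex_def)
  then have "reach (V - {v}) (del_vertex_edges E v) a b"
    using ncomp_ge_2_if_not_reach[of "V - {v}" a b "del_vertex_edges E v"] assms(1)
      \<open>a \<in> V - {v}\<close> \<open>b \<in> V - {v}\<close>
    by (cases "reach (V - {v}) (del_vertex_edges E v) a b") auto
  then show "reach (V - {v}) E a b"
    by (rule reach_mono) (simp_all add: adj_def del_vertex_edges_def)
next
  fix a b assume "a \<in> V - {v}" "b \<in> V - {v}" "v \<notin> V"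
  then show "reach (V - {v}) E a b" using assms(2) by (simp add: connected_graph_def)
qed

lemma connected_on_insert:
  assumes "connected_on P E" "u \<in> P" "adj E u v"
  shows "connected_on (insert v P) E"
proof (rule connected_onI[where c = u])
  fix a assume "a \<in> insert v P"
  then show "reach (insert v P) E a u"
  proof
    assume "a = v"
    then show ?thesis using assms(2,3) by (intro reach_step) (auto intro: adj_sym)
  next
    assume "a \<in> P"
    then have "reach P E a u" using assms(1,2) by (simp add: connected_on_def)
    then show ?thesis by (rule reach_mono) auto
  qed
qed

lemma finite_edges: "graph V E \<Longrightarrow> finite E"
proof -
  assume G: "graph V E"
  then have "E \<subseteq> Pow V" by (force simp: graph_def)
  then show "finite E" using G by (auto simp: graph_def intro: finite_subset)
qed

lemma graph_del_vertex:
  assumes "graph V E"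
  shows "graph (V - {y}) (del_vertex_edges E y)"
  unfolding graph_def
proof (intro conjI ballI)
  show "finite (V - {y})" using assms by (simp add: graph_def)
  fix e assume "e \<in> del_vertex_edges E y"
  then have "e \<in> E" "y \<notin> e" by (auto simp: del_vertex_edges_def)
  then show "\<exists>u v. e = {u, v} \<and> u \<noteq> v \<and> u \<in> V - {y} \<and> v \<in> V - {y}"
    using assms unfolding graph_def by blast
qed

section \<open>Orderings with connected prefixes and suffixes\<close>

definition separated_by :: "'a set \<Rightarrow> 'a set set \<Rightarrow> 'a \<Rightarrow> 'a \<Rightarrow> 'a set" where
  "separated_by R E y v = {w \<in> R - {v}. \<not> reach (R - {v}) E w y}"

lemma not_in_separated_by: "y \<notin> separated_by R E y v"
  by (auto simp: separated_by_def intro: reach_refl)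

lemma connected_on_delete_if_separated_by_empty:
  assumes "separated_by R E y v = {}"
  shows "connected_on (R - {v}) E"
proof (rule connected_onI[where c = y])
  fix a assume "a \<in> R - {v}"
  with assms show "reach (R - {v}) E a y" unfolding separated_by_def by blast
qed

text \<open>If deleting \<open>v\<close> cuts \<open>u\<close> off from \<open>y\<close>, then everything that deleting \<open>u\<close> cuts off
  from \<open>y\<close> was already cut off by \<open>v\<close>: the vertices still joined to \<open>y\<close> avoid \<open>u\<close>, and
  \<open>v\<close> stays joined to them through its neighbour on the side of \<open>y\<close>.\<close>

lemma separated_by_subset:
  assumes R: "connected_on R E" and v: "v \<in> R" "v \<noteq> y" and y: "y \<in> R"
    and u: "u \<in> separated_by R E y v"
  shows "separated_by R E y u \<subseteq> separated_by R E y v - {u}"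
proof -
  define T where "T = {z \<in> R - {v}. reach (R - {v}) E z y}"
  have uT: "u \<notin> T" using u by (auto simp: T_def separated_by_def)
  have reach_avoiding_u: "reach (R - {u}) E a y" if "a \<in> R - {v}" "reach (R - {v}) E a y" for a
  proof -
    have "reach T E a y" using reach_within_component[OF that(2)] by (simp add: T_def)
    then show ?thesis by (rule reach_mono) (use uT T_def in auto)
  qed
  have v_reach: "reach (R - {u}) E v y"
  proof -
    let ?A = "insert v (separated_by R E y v)"
    have "reach R E v y" using R v y by (simp add: connected_on_def)
    moreover have "y \<notin> ?A"
      using v not_in_separated_by[of y R E v] by auto
    ultimately obtain p q where pq: "p \<in> R \<inter> ?A" "q \<in> R - ?A" "adj E p q"
      using reach_leaves_set[of R E v y ?A] by blast
    have q: "q \<in> R - {v}" "reach (R - {v}) E q y" using pq by (auto simp: separated_by_def)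
    have "p = v"
    proof (rule ccontr)
      assume "p \<noteq> v"
      then have p: "p \<in> separated_by R E y v" using pq by auto
      then have "reach (R - {v}) E p q" using pq q by (intro reach_step) (auto simp: separated_by_def)
      with q p show False by (auto simp: separated_by_def intro: reach_trans)
    qed
    moreover have "q \<noteq> u" "v \<noteq> u" using pq u by (auto simp: separated_by_def)
    ultimately have "reach (R - {u}) E v q" using pq by (intro reach_step) auto
    then show ?thesis using reach_avoiding_u[OF q] by (rule reach_trans)
  qed
  show ?thesis
  proof
    fix w assume "w \<in> separated_by R E y u"
    then have w: "w \<in> R" "w \<noteq> u" "\<not> reach (R - {u}) E w y" by (auto simp: separated_by_def)
    then have "w \<noteq> v" using v_reach by auto
    with w reach_avoiding_u show "w \<in> separated_by R E y v - {u}"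
      by (auto simp: separated_by_def)
  qed
qed

text \<open>Only the edge \<open>xy\<close> of \<open>G + xy\<close> is missing from \<open>G\<close>, and it cannot leave \<open>A\<close>.\<close>

lemma exists_edge_leaving:
  assumes NC: "connected_on (V - {v}) (E \<union> {{x, y}})"
    and A: "A \<subseteq> V - {v}" "A \<noteq> {}" "y \<notin> A" and x: "x \<in> V - {v} - A"
  shows "\<exists>u\<in>A. \<exists>w\<in>V - {v} - A. adj E u w"
proof -
  obtain a where a: "a \<in> A" using A by blast
  then have "reach (V - {v}) (E \<union> {{x, y}}) a x" using NC A x by (auto simp: connected_on_def)
  then obtain u w where "u \<in> A" "w \<in> V - {v} - A" "adj (E \<union> {{x, y}}) u w"
    using reach_leaves_set[of _ _ a x A] a x A by blast
  moreover have "u \<noteq> x" "u \<noteq> y" using \<open>u \<in> A\<close> x A by auto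
  ultimately show ?thesis by (auto simp: adj_def doubleton_eq_iff)
qed

text \<open>Choose, among the neighbours \<open>v \<noteq> y\<close> of \<open>P\<close> in \<open>R = V - P\<close>, one that cuts off as few
  vertices of \<open>R\<close> from \<open>y\<close> as possible; then it cuts off none.\<close>

lemma exists_removable_neighbour:
  assumes fin: "finite V"
    and NC: "\<And>v. connected_on (V - {v}) (E \<union> {{x, y}})"
    and P: "x \<in> P" "P \<subseteq> V" and y: "y \<in> V - P"
    and R: "connected_on (V - P) E" "V - P \<noteq> {y}"
  shows "\<exists>v\<in>V - P - {y}. (\<exists>u\<in>P. adj E u v) \<and> connected_on (V - P - {v}) E"
proof -
  define D where "D v = separated_by (V - P) E y v" for v
  define Cand where "Cand = {v \<in> V - P - {y}. \<exists>u\<in>P. adj E u v}"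
  have "Cand \<noteq> {}"
  proof -
    have "V - P - {y} \<noteq> {}" using R y by auto
    then obtain u w where "u \<in> V - P - {y}" "w \<in> P" "adj E u w"
      using exists_edge_leaving[OF NC[of y], of "V - P - {y}"] P y by auto
    then show ?thesis by (auto simp: Cand_def intro: adj_sym)
  qed
  then obtain v where v: "v \<in> Cand" and v_min: "\<And>v'. v' \<in> Cand \<Longrightarrow> card (D v) \<le> card (D v')"
    using ex_has_least_nat[of "\<lambda>v. v \<in> Cand" _ "\<lambda>v. card (D v)"] by blast
  have "D v = {}"
  proof (rule ccontr)
    assume "D v \<noteq> {}"
    moreover have "D v \<subseteq> V - {v}" "y \<notin> D v" "x \<in> V - {v} - D v"
      using v P by (auto simp: D_def Cand_def separated_by_def intro: reach_refl)
    ultimately obtain u w where u: "u \<in> D v" and w: "w \<in> V - {v} - D v" and uw: "adj E u w"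
      using exists_edge_leaving[OF NC[of v]] by metis
    have "w \<in> P"
    proof (rule ccontr)
      assume "w \<notin> P"
      then have "reach (V - P - {v}) E w y" using w by (auto simp: D_def separated_by_def)
      moreover have "reach (V - P - {v}) E u w"
        using u w \<open>w \<notin> P\<close> uw by (intro reach_step) (auto simp: D_def separated_by_def)
      ultimately show False using u by (auto simp: D_def separated_by_def intro: reach_trans)
    qed
    then have "u \<in> Cand" using u uw
      by (auto simp: Cand_def D_def separated_by_def intro: adj_sym reach_refl)
    have "card (D u) \<le> card (D v - {u})"
      using separated_by_subset[OF R(1), of v y u] v y u fin
      by (intro card_mono) (auto simp: D_def Cand_def separated_by_def)
    also have "\<dots> < card (D v)"
      using u fin by (intro card_Diff1_less) (auto simp: D_def separated_by_def)
    finally show False using v_min[OF \<open>u \<in> Cand\<close>] by simp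
  qed
  then have "connected_on (V - P - {v}) E"
    unfolding D_def by (rule connected_on_delete_if_separated_by_empty)
  with v show ?thesis by (auto simp: Cand_def)
qed

lemma exists_ordering_with_connected_prefixes:
  assumes fin: "finite V"
    and NC: "\<And>v. connected_on (V - {v}) (E \<union> {{x, y}})"
    and P: "x \<in> P" "P \<subseteq> V" "connected_on P E"
    and R: "y \<in> V - P" "connected_on (V - P) E"
  shows "\<exists>ws. distinct ws \<and> set ws = V - P - {y} \<and>
    (\<forall>k\<le>length ws. connected_on (P \<union> set (take k ws)) E \<and>
                    connected_on (V - P - set (take k ws)) E)"
  using P R
proof (induction "card (V - P)" arbitrary: P rule: less_induct)
  case less
  show ?case
  proof (cases "V - P = {y}")
    case True
    then show ?thesis using less.prems by (intro exI[of _ "[]"]) auto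
  next
    case False
    then obtain v u where v: "v \<in> V - P - {y}" "u \<in> P" "adj E u v"
      and R': "connected_on (V - P - {v}) E"
      using exists_removable_neighbour[OF fin NC] less.prems by metis
    have "V - insert v P = V - P - {v}" by auto
    moreover have "card (V - P - {v}) < card (V - P)"
      using fin v by (intro card_Diff1_less) auto
    moreover have "connected_on (insert v P) E"
      using connected_on_insert[OF less.prems(3) v(2,3)] .
    ultimately obtain ws where ws: "distinct ws" "set ws = V - insert v P - {y}"
      "\<forall>k\<le>length ws. connected_on (insert v P \<union> set (take k ws)) E \<and>
                      connected_on (V - insert v P - set (take k ws)) E"
      using less.hyps[of "insert v P"] less.prems v R' by auto
    have "\<forall>k\<le>length (v # ws). connected_on (P \<union> set (take k (v # ws))) E \<and>
                               connected_on (V - P - set (take k (v # ws))) E"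
    proof (intro allI impI)
      fix k assume k: "k \<le> length (v # ws)"
      show "connected_on (P \<union> set (take k (v # ws))) E \<and>
            connected_on (V - P - set (take k (v # ws))) E"
      proof (cases k)
        case 0
        then show ?thesis using less.prems by simp
      next
        case (Suc k')
        then have "P \<union> set (take k (v # ws)) = insert v P \<union> set (take k' ws)"
          "V - P - set (take k (v # ws)) = V - insert v P - set (take k' ws)" by auto
        then show ?thesis using ws(3) k Suc by simp
      qed
    qed
    with ws v show ?thesis by (intro exI[of _ "v # ws"]) auto
  qed
qed

lemma exists_ordering_with_connected_prefixes_from:
  assumes fin: "finite V" and G: "connected_graph V E"
    and xy: "x \<in> V" "y \<in> V" "x \<noteq> y" and NC: "\<not> has_cutvertex V (E \<union> {{x, y}})"
  shows "\<exists>vs. distinct vs \<and> set vs = V - {y} \<and> hd vs = x \<and> vs \<noteq> [] \<and>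
    (\<forall>k\<in>{1..length vs}. connected_on (set (take k vs)) E \<and>
                         connected_on (V - set (take k vs)) E)"
proof -
  have "reach V (E \<union> {{x, y}}) a b" if "a \<in> V" "b \<in> V" for a b
  proof -
    have "reach V E a b" using G that by (simp add: connected_graph_def)
    then show ?thesis by (rule reach_mono) (auto simp: adj_def)
  qed
  then have "connected_graph V (E \<union> {{x, y}})"
    using G by (simp add: connected_graph_def)
  then have NC': "connected_on (V - {v}) (E \<union> {{x, y}})" for v
    using connected_on_delete_vertex_if_no_cutvertex[OF fin _ NC] by blast
  have "connected_on {x} E" by (auto simp: connected_on_def intro: reach_refl)
  moreover have "connected_on (V - {x}) E"
    unfolding connected_on_def
  proof (intro ballI)
    fix a b assume "a \<in> V - {x}" "b \<in> V - {x}"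
    then have "reach (V - {x}) (E \<union> {{x, y}}) a b" using NC'[of x] by (simp add: connected_on_def)
    then show "reach (V - {x}) E a b" by (rule reach_mono) (auto simp: adj_def doubleton_eq_iff)
  qed
  ultimately obtain ws where ws: "distinct ws" "set ws = V - {x} - {y}"
    "\<forall>k\<le>length ws. connected_on ({x} \<union> set (take k ws)) E \<and>
                    connected_on (V - {x} - set (take k ws)) E"
    using exists_ordering_with_connected_prefixes[OF fin NC', of "{x}"] xy by auto
  have "connected_on (set (take k (x # ws))) E \<and> connected_on (V - set (take k (x # ws))) E"
    if k: "k \<in> {1..length (x # ws)}" for k
  proof -
    obtain k' where k': "k = Suc k'" "k' \<le> length ws" using k by (cases k) auto
    then have "set (take k (x # ws)) = {x} \<union> set (take k' ws)"
      "V - set (take k (x # ws)) = V - {x} - set (take k' ws)" by auto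
    then show ?thesis using ws(3) k'(2) by presburger
  qed
  with ws xy show ?thesis by (intro exI[of _ "x # ws"]) auto
qed

section \<open>Edge cuts and bonds\<close>

definition cut :: "'a set \<Rightarrow> 'a set set \<Rightarrow> 'a set \<Rightarrow> 'a set set" where
  "cut V E P = {e \<in> E. \<exists>a b. a \<in> P \<and> b \<in> V - P \<and> e = {a, b}}"

lemma finite_cut: "finite E \<Longrightarrow> finite (cut V E P)"
  by (simp add: cut_def)

lemma not_reach_diff_cut:
  assumes "a \<in> P" "b \<notin> P"
  shows "\<not> reach V (E - cut V E P) a b"
proof
  assume "reach V (E - cut V E P) a b"
  then obtain u w where "u \<in> V \<inter> P" "w \<in> V - P" "adj (E - cut V E P) u w"
    using reach_leaves_set[of V _ a b P] assms by blast
  then show False by (auto simp: adj_def cut_def)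
qed

lemma connected_on_diff_psubset_cut:
  assumes P: "P \<subseteq> V" "connected_on P E" and R: "connected_on (V - P) E"
    and F: "F \<subset> cut V E P"
  shows "connected_on V (E - F)"
proof -
  obtain e where e: "e \<in> cut V E P" "e \<notin> F" using F by blast
  then obtain a b where ab: "a \<in> P" "b \<in> V - P" "e = {a, b}" "e \<in> E" by (auto simp: cut_def)
  have adj_inside: "adj (E - F) p q" if "adj E p q" "p \<in> S" "q \<in> S" "S = P \<or> S = V - P" for p q S
  proof -
    have "{p, q} \<notin> cut V E P" using that by (auto simp: cut_def doubleton_eq_iff)
    then show ?thesis using that F by (auto simp: adj_def)
  qed
  show ?thesis
  proof (rule connected_onI[where c = a])
    fix p assume "p \<in> V"
    show "reach V (E - F) p a"
    proof (cases "p \<in> P")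
      case True
      then have "reach P E p a" using P ab by (simp add: connected_on_def)
      then show ?thesis by (rule reach_mono) (use P adj_inside[where S = P] in auto)
    next
      case False
      with \<open>p \<in> V\<close> have "reach (V - P) E p b" using R ab by (simp add: connected_on_def)
      then have "reach V (E - F) p b" by (rule reach_mono) (use adj_inside[where S = "V - P"] in auto)
      moreover have "reach V (E - F) b a"
        using ab e P by (intro reach_step) (auto simp: adj_def insert_commute)
      ultimately show ?thesis by (rule reach_trans)
    qed
  qed
qed

lemma xy_bond_cut:
  assumes G: "graph V E" "connected_graph V E"
    and P: "P \<subseteq> V" "connected_on P E" and R: "connected_on (V - P) E"
    and xy: "x \<in> P" "y \<in> V - P"
  shows "xy_bond V E x y (cut V E P)"
proof -
  have fin: "finite V" using G by (simp add: graph_def)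
  have one: "ncomp V E = 1"
    using G(2) by (intro ncomp_eq_1_if_connected_on) (auto simp: connected_graph_def connected_on_def)
  have "V \<noteq> {}" using xy by auto
  have sep: "\<not> reach V (E - cut V E P) x y" using xy by (intro not_reach_diff_cut) auto
  then have "disconnecting V E (cut V E P)"
    using ncomp_ge_2_if_not_reach[OF fin _ _ sep] xy P one
    by (auto simp: disconnecting_def cut_def)
  moreover have "\<not> disconnecting V E F" if "F \<subset> cut V E P" for F
    using ncomp_eq_1_if_connected_on[OF connected_on_diff_psubset_cut[OF P R that] \<open>V \<noteq> {}\<close>] one
    by (auto simp: disconnecting_def)
  ultimately show ?thesis using xy P sep by (auto simp: xy_bond_def bond_def)
qed

lemma card_le_card_cut:
  assumes "finite E" "S \<subseteq> P" "\<And>u. u \<in> S \<Longrightarrow> \<exists>w\<in>V - P. adj E u w"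
  shows "card S \<le> card (cut V E P)"
proof -
  obtain f where f: "\<And>u. u \<in> S \<Longrightarrow> f u \<in> V - P \<and> adj E u (f u)"
    using assms(3) by metis
  have "inj_on (\<lambda>u. {u, f u}) S"
    by (rule inj_onI) (use f assms(2) in \<open>auto simp: doubleton_eq_iff\<close>)
  moreover have "(\<lambda>u. {u, f u}) ` S \<subseteq> cut V E P"
    using f assms(2) by (fastforce simp: cut_def adj_def)
  ultimately show ?thesis by (rule card_inj_on_le) (simp add: finite_cut assms(1))
qed

lemma exists_bond_dominating_prefix_cuts:
  assumes G: "graph V E" "connected_graph V E" and y: "y \<in> V"
    and vs: "set vs = V - {y}" "hd vs = x" "vs \<noteq> []"
    and conn: "\<forall>k\<in>{1..length vs}. connected_on (set (take k vs)) E \<and>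
                                 connected_on (V - set (take k vs)) E"
  shows "\<exists>F. xy_bond V E x y F \<and>
    (\<forall>k\<in>{1..length vs}. card (cut V E (set (take k vs))) \<le> card F)"
proof -
  let ?c = "\<lambda>k. card (cut V E (set (take k vs)))"
  have "Max (?c ` {1..length vs}) \<in> ?c ` {1..length vs}"
    using vs(3) by (intro Max_in) (auto simp: Suc_le_eq)
  then obtain k where k: "k \<in> {1..length vs}" "?c k = Max (?c ` {1..length vs})" by auto
  then have k_max: "?c k' \<le> ?c k" if "k' \<in> {1..length vs}" for k'
    using that by simp
  have "set (take k vs) \<subseteq> V" "y \<in> V - set (take k vs)"
    using vs(1) y set_take_subset[of k vs] by auto
  moreover have "x \<in> set (take k vs)" using k vs(2,3) by (cases vs; cases k) auto
  ultimately have "xy_bond V E x y (cut V E (set (take k vs)))"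
    using conn k by (intro xy_bond_cut[OF G]) auto
  then show ?thesis using k_max by blast
qed

lemma two_le_card_cut_singleton:
  assumes G: "graph V E" "connected_graph V E" "\<not> has_cutvertex V E"
    and x: "x \<in> V" and ab: "a \<in> V - {x}" "b \<in> V - {x}" "a \<noteq> b"
  shows "2 \<le> card (cut V E {x})"
proof -
  have fin: "finite V" using G(1) by (simp add: graph_def)
  have "reach V E x a" using G(2) x ab by (simp add: connected_graph_def)
  then obtain w where w: "w \<in> V - {x}" "adj E x w"
    using reach_leaves_set[of V E x a "{x}"] ab by blast
  obtain t where t: "t \<in> V - {x}" "t \<noteq> w" using ab by blast
  have "reach (V - {w}) E x t"
    using connected_on_delete_vertex_if_no_cutvertex[OF fin G(2,3), of w] x w t
    unfolding connected_on_def by blast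
  then obtain q where q: "q \<in> V - {w} - {x}" "adj E x q"
    using reach_leaves_set[of "V - {w}" E x t "{x}"] t by blast
  have "{{x, w}, {x, q}} \<subseteq> cut V E {x}"
    using w q by (auto simp: cut_def adj_def)
  then have "card {{x, w}, {x, q}} \<le> card (cut V E {x})"
    by (intro card_mono finite_cut finite_edges[OF G(1)])
  moreover have "{x, w} \<noteq> {x, q}" using w q by (auto simp: doubleton_eq_iff)
  ultimately show ?thesis by simp
qed

lemma card_cut_del_vertex_le:
  assumes "finite E"
  shows "card (cut (V - {y}) (del_vertex_edges E y) P) \<le> card (cut V E P)"
  by (rule card_mono) (auto simp: assms finite_cut cut_def del_vertex_edges_def)

lemma one_le_card_xy_bond:
  assumes "graph V E" "xy_bond V E x y F"
  shows "1 \<le> card F"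
proof -
  have "F \<noteq> {}" "F \<subseteq> E" using assms(2) by (auto simp: xy_bond_def bond_def disconnecting_def)
  then show ?thesis
    using finite_edges[OF assms(1)] by (simp add: Suc_le_eq card_gt_0_iff finite_subset)
qed

lemma two_le_card_cut_first:
  assumes G: "graph V E" "connected_graph V E" "\<not> has_cutvertex V E" and y: "y \<in> V"
    and vs: "distinct vs" "set vs = V - {y}" "hd vs = x" "2 \<le> length vs"
  shows "2 \<le> card (cut V E (set (take 1 vs)))"
proof -
  obtain w ws where "vs = x # w # ws"
    using vs(3,4) by (cases vs rule: remdups_adj.cases) auto
  then have "x \<in> V" "w \<in> V - {x}" "y \<in> V - {x}" "w \<noteq> y" "set (take 1 vs) = {x}"
    using vs(1,2) y by auto
  then show ?thesis using two_le_card_cut_singleton[OF G] by simp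
qed

section \<open>Path-decompositions from vertex orderings\<close>

lemma nth_in_set_take_iff:
  assumes "distinct xs" "k < length xs"
  shows "xs ! k \<in> set (take i xs) \<longleftrightarrow> k < i"
proof -
  have "xs ! k \<in> set (take i xs) \<longleftrightarrow> (\<exists>j<min i (length xs). xs ! j = xs ! k)"
    by (auto simp: in_set_conv_nth)
  also have "\<dots> \<longleftrightarrow> k < i"
    using assms nth_eq_iff_index_eq by (metis min_less_iff_conj)
  finally show ?thesis .
qed

lemma interval_if_downward_closed:
  fixes j n :: nat
  assumes "j < n" and down: "\<And>i i'. j < i' \<Longrightarrow> i' \<le> i \<Longrightarrow> Q i \<Longrightarrow> Q i'"
  shows "\<exists>a b. a \<le> b \<and> b < n \<and> {i. i < n \<and> (i = j \<or> j < i \<and> Q i)} = {a..b}"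
proof -
  define I where "I = {i. i < n \<and> (i = j \<or> j < i \<and> Q i)}"
  have "finite I" "j \<in> I" using assms(1) by (auto simp: I_def)
  then have b: "Max I \<in> I" "j \<le> Max I" by (auto intro: Max_in Max_ge)
  have "I = {j..Max I}"
  proof
    show "I \<subseteq> {j..Max I}" using \<open>finite I\<close> by (auto simp: I_def)
    show "{j..Max I} \<subseteq> I"
    proof
      fix i assume i: "i \<in> {j..Max I}"
      show "i \<in> I"
      proof (cases "i = j")
        case False
        with i have "j < i" "i \<le> Max I" by auto
        moreover from this b have "Max I < n" "Q (Max I)" by (auto simp: I_def)
        ultimately show ?thesis using down by (auto simp: I_def)
      qed (use \<open>j \<in> I\<close> in simp)
    qed
  qed
  with b show ?thesis by (auto simp: I_def)
qed

definition ordering_bag :: "'a set set \<Rightarrow> 'a list \<Rightarrow> nat \<Rightarrow> 'a set" where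
  "ordering_bag E vs i = insert (vs ! i)
     {vs ! j | j. j < i \<and> (\<exists>k. i \<le> k \<and> k < length vs \<and> adj E (vs ! j) (vs ! k))}"

lemma nth_in_ordering_bag_iff:
  assumes "distinct vs" "i < length vs" "j < length vs"
  shows "vs ! j \<in> ordering_bag E vs i \<longleftrightarrow>
    i = j \<or> j < i \<and> (\<exists>k. i \<le> k \<and> k < length vs \<and> adj E (vs ! j) (vs ! k))"
proof -
  have mem: "vs ! j \<in> {vs ! j' | j'. j' < i \<and> R j'} \<longleftrightarrow> j < i \<and> R j" for R
  proof
    assume "vs ! j \<in> {vs ! j' | j'. j' < i \<and> R j'}"
    then obtain j' where "vs ! j = vs ! j'" "j' < i" "R j'" by blast
    moreover have "j' = j"
      using calculation assms nth_eq_iff_index_eq[OF assms(1) assms(3), of j'] by simp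
    ultimately show "j < i \<and> R j" by simp
  qed blast
  have "vs ! j = vs ! i \<longleftrightarrow> i = j"
    using assms nth_eq_iff_index_eq by metis
  then show ?thesis by (simp only: ordering_bag_def insert_iff mem)
qed

lemma path_decomp_ordering_bags:
  assumes G: "graph W E" and vs: "distinct vs" "set vs = W" "vs \<noteq> []"
  shows "path_decomp W E (map (ordering_bag E vs) [0..<length vs])"
    (is "path_decomp W E ?Xs")
proof -
  let ?n = "length vs"
  have idx: "\<exists>j<?n. v = vs ! j" if "v \<in> W" for v
    using that vs(2) by (metis in_set_conv_nth)
  have bag_subset: "ordering_bag E vs i \<subseteq> W" if "i < ?n" for i
    using that vs(2) by (auto simp: ordering_bag_def)
  have interval: "\<exists>a b. a \<le> b \<and> b < length ?Xs \<and> {i. i < length ?Xs \<and> v \<in> ?Xs ! i} = {a..b}"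
    if v: "v \<in> W" for v
  proof -
    obtain j where j: "j < ?n" "v = vs ! j" using idx[OF v] by blast
    then have "{i. i < length ?Xs \<and> v \<in> ?Xs ! i} =
        {i. i < ?n \<and> (i = j \<or> j < i \<and> (\<exists>k. i \<le> k \<and> k < ?n \<and> adj E (vs ! j) (vs ! k)))}"
      using nth_in_ordering_bag_iff[OF vs(1) _ j(1)] by auto
    moreover have "\<exists>a b. a \<le> b \<and> b < ?n \<and>
        {i. i < ?n \<and> (i = j \<or> j < i \<and> (\<exists>k. i \<le> k \<and> k < ?n \<and> adj E (vs ! j) (vs ! k)))} = {a..b}"
      by (rule interval_if_downward_closed[OF j(1)]) (meson order_trans)
    ultimately show ?thesis by simp
  qed
  have edge: "\<exists>i<length ?Xs. e \<subseteq> ?Xs ! i" if "e \<in> E" for e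
  proof -
    obtain a b where ab: "e = {a, b}" "a \<noteq> b" "a \<in> W" "b \<in> W"
      using G \<open>e \<in> E\<close> unfolding graph_def by blast
    obtain p q where pq: "p < ?n" "a = vs ! p" "q < ?n" "b = vs ! q" using idx ab by metis
    have "adj E a b" "adj E b a" using ab \<open>e \<in> E\<close> by (auto simp: adj_def insert_commute)
    then have "a \<in> ordering_bag E vs (max p q)" "b \<in> ordering_bag E vs (max p q)"
      using pq nth_in_ordering_bag_iff[OF vs(1)] by (auto simp: max_def)
    then show ?thesis using pq ab by (intro exI[of _ "max p q"]) auto
  qed
  show ?thesis
    unfolding path_decomp_def using vs(3) bag_subset interval edge by auto
qed

lemma card_ordering_bag_le:
  assumes "finite E" "distinct vs" "set vs = W" "i < length vs"
  shows "card (ordering_bag E vs i) \<le> 1 + card (cut W E (set (take i vs)))"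
proof -
  let ?S = "{vs ! j | j. j < i \<and> (\<exists>k. i \<le> k \<and> k < length vs \<and> adj E (vs ! j) (vs ! k))}"
  have "card ?S \<le> card (cut W E (set (take i vs)))"
  proof (rule card_le_card_cut[OF assms(1)])
    show "?S \<subseteq> set (take i vs)"
      using assms(2,4) by (auto simp: nth_in_set_take_iff)
    fix u assume "u \<in> ?S"
    then obtain j k where "u = vs ! j" "j < i" "i \<le> k" "k < length vs" "adj E u (vs ! k)"
      by blast
    moreover have "vs ! k \<in> W - set (take i vs)"
      using calculation assms(2,3) by (auto simp: nth_in_set_take_iff)
    ultimately show "\<exists>w\<in>W - set (take i vs). adj E u w" by blast
  qed
  moreover have "finite ?S" by simp
  ultimately show ?thesis unfolding ordering_bag_def
    using card_insert_le[of ?S "vs ! i"] by (simp add: card_insert_if)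
qed

lemma pw_at_le_pd_width:
  assumes "finite V" "path_decomp V E Xs" "x \<in> hd Xs"
  shows "pw_at V E x \<le> pd_width Xs"
proof -
  define Q where "Q w \<longleftrightarrow> (\<exists>Ys. path_decomp V E Ys \<and> x \<in> hd Ys \<and> w = pd_width Ys)" for w
  have nonneg: "0 \<le> w" if "Q w" for w
  proof -
    obtain Ys where Ys: "path_decomp V E Ys" "x \<in> hd Ys" "w = pd_width Ys"
      using \<open>Q w\<close> by (auto simp: Q_def)
    then have "hd Ys \<in> set Ys" by (simp add: path_decomp_def)
    then have "finite (hd Ys)"
      using assms(1) Ys(1) by (meson finite_subset path_decomp_def)
    with \<open>hd Ys \<in> set Ys\<close> have "1 \<le> card (hd Ys)" "card (hd Ys) \<le> Max (card ` set Ys)"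
      using Ys(2) by (auto simp: Suc_le_eq card_gt_0_iff)
    then show ?thesis using Ys(3) by (simp add: pd_width_def)
  qed
  \<comment> \<open>\<open>Least\<close> over \<open>int\<close> is only attained because all candidate widths are nonnegative.\<close>
  define k where "k = (LEAST k::nat. Q (int k))"
  have Q: "Q (pd_width Xs)" using assms(2,3) by (auto simp: Q_def)
  then have "Q (int (nat (pd_width Xs)))" using nonneg by simp
  then have Qk: "Q (int k)" unfolding k_def by (rule LeastI)
  have k_le: "int k \<le> w" if "Q w" for w
    using Least_le[of "\<lambda>k. Q (int k)" "nat w"] that nonneg[OF that] by (simp add: k_def)
  have "pw_at V E x = int k"
    unfolding pw_at_def Q_def[symmetric] using Qk k_le by (intro Least_equality)
  then show ?thesis using k_le[OF Q] by simp
qed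

lemma pw_at_le_prefix_cuts:
  assumes G: "graph W E" and vs: "distinct vs" "set vs = W" "vs \<noteq> []"
    and cuts: "\<And>i. i < length vs \<Longrightarrow> card (cut W E (set (take i vs))) \<le> c"
  shows "pw_at W E (hd vs) \<le> int c"
proof -
  let ?Xs = "map (ordering_bag E vs) [0..<length vs]"
  have "card X \<le> 1 + c" if "X \<in> set ?Xs" for X
    using that card_ordering_bag_le[OF finite_edges[OF G] vs(1,2)] cuts by fastforce
  then have "Max (card ` set ?Xs) \<le> 1 + c"
    using vs(3) by (intro Max.boundedI) auto
  then have "pd_width ?Xs \<le> int c" by (simp add: pd_width_def)
  moreover have "hd vs \<in> hd ?Xs"
    using vs(3) by (cases vs) (auto simp: ordering_bag_def upt_rec)
  ultimately show ?thesis
    using pw_at_le_pd_width path_decomp_ordering_bags[OF G vs] G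
    by (fastforce simp: graph_def)
qed

theorem lemma3p4:
  fixes V :: "'a set" and E :: "'a set set" and x y :: 'a
  assumes "graph V E"
    and "connected_graph V E"
    and "E \<noteq> {}"
    and "x \<in> V" and "y \<in> V" and "x \<noteq> y"
    and "\<not> has_cutvertex V (E \<union> {{x, y}})"
  shows "(\<exists>F. xy_bond V E x y F \<and>
            pw_at (V - {y}) (del_vertex_edges E y) x \<le> 3 * int (card F) - 2)
       \<and> (\<not> has_cutvertex V E \<longrightarrow>
            (\<exists>F. xy_bond V E x y F \<and>
               pw_at (V - {y}) (del_vertex_edges E y) x \<le> 3 * int (card F) - 3))"
proof -
  note G = assms(1,2) and xy = assms(4-6)
  let ?H = "del_vertex_edges E y"
  obtain vs where vs: "distinct vs" "set vs = V - {y}" "hd vs = x" "vs \<noteq> []"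
    and conn: "\<forall>k\<in>{1..length vs}. connected_on (set (take k vs)) E \<and>
                                 connected_on (V - set (take k vs)) E"
    using exists_ordering_with_connected_prefixes_from[OF _ G(2) xy assms(7)] G(1)
    unfolding graph_def by blast
  obtain F where F: "xy_bond V E x y F"
    and F_max: "\<forall>k\<in>{1..length vs}. card (cut V E (set (take k vs))) \<le> card F"
    using exists_bond_dominating_prefix_cuts[OF G xy(2) vs(2-4) conn] by blast
  have "card (cut (V - {y}) ?H (set (take i vs))) \<le> card F" if "i < length vs" for i
  proof (cases "i = 0")
    case False
    then show ?thesis
      using le_trans[OF card_cut_del_vertex_le[OF finite_edges[OF G(1)]]] F_max that by simp
  qed (simp add: cut_def)
  then have pw_F: "pw_at (V - {y}) ?H x \<le> int (card F)"
    using pw_at_le_prefix_cuts[OF graph_del_vertex[OF G(1)] vs(1,2,4)] vs(3) by blast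
  have pw_0: "pw_at (V - {y}) ?H x \<le> 0" if "length vs = 1"
    using pw_at_le_prefix_cuts[OF graph_del_vertex[OF G(1)] vs(1,2,4), of 0] vs(3) that
    by (simp add: cut_def)
  have F2: "2 \<le> card F" if "\<not> has_cutvertex V E" "2 \<le> length vs"
    using two_le_card_cut_first[OF G that(1) xy(2) vs(1-3) that(2)] F_max that(2) by force
  have "length vs = 1 \<or> 2 \<le> length vs" using vs(4) by (cases vs rule: remdups_adj.cases) auto
  then show ?thesis
    using F one_le_card_xy_bond[OF G(1) F] pw_F pw_0 F2 by (auto intro!: exI[of _ F])
qed

end
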